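(* Let $R\subset S$ be a pointwise minimal ring extension. Then $\mathcal S[R,S]=S$, so that $\pounds[R,S]=1$.
   Context: All rings are commutative with identity. $[R,S]$ is the set of $R$-subalgebras of $S$; $T\subset U$ is minimal if $[T,U]=\{T,U\}$. An atom of $[R,S]$ is $T$ with $R\subset T$ minimal; the socle $\mathcal S[R,S]$ is the product (compositum) of all atoms. The Loewy series is $S_0=R$, $S_{i+1}=\mathcal S[S_i,S]$ while $S_i\neq S$, and $\pounds[R,S]$ is the least $n$ with $S_n=S$. $R\subset S$ is pointwise minimal if $R\subset R[x]$ is minimal for each $x\in S\setminus R$. *)

theory Defs
  imports Main
begin

text \<open>Rings are subsets of an ambient commutative ring type; a subring contains 0 and 1
  and is closed under addition, negation and multiplication.\<close>

definition is_subring :: "'a::comm_ring_1 set \<Rightarrow> bool" where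
  "is_subring A \<longleftrightarrow> 0 \<in> A \<and> 1 \<in> A \<and> (\<forall>x\<in>A. \<forall>y\<in>A. x + y \<in> A \<and> x * y \<in> A) \<and> (\<forall>x\<in>A. - x \<in> A)"

text \<open>The subring generated by a set X (for R \<subseteq> X, this is the R-algebra generated).\<close>
definition ring_gen :: "'a::comm_ring_1 set \<Rightarrow> 'a set" where
  "ring_gen X = \<Inter>{T. is_subring T \<and> X \<subseteq> T}"

definition subalg_interval :: "'a::comm_ring_1 set \<Rightarrow> 'a set \<Rightarrow> 'a set set" where
  "subalg_interval R S = {T. is_subring T \<and> R \<subseteq> T \<and> T \<subseteq> S}"

definition minimal_ext :: "'a::comm_ring_1 set \<Rightarrow> 'a set \<Rightarrow> bool" where
  "minimal_ext T U \<longleftrightarrow> is_subring T \<and> is_subring U \<and> T \<subset> U \<and> subalg_interval T U = {T, U}"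

definition atoms :: "'a::comm_ring_1 set \<Rightarrow> 'a set \<Rightarrow> 'a set set" where
  "atoms R S = {T \<in> subalg_interval R S. minimal_ext R T}"

definition socle :: "'a::comm_ring_1 set \<Rightarrow> 'a set \<Rightarrow> 'a set" where
  "socle R S = ring_gen (R \<union> \<Union>(atoms R S))"

primrec loewy_series :: "'a::comm_ring_1 set \<Rightarrow> 'a set \<Rightarrow> nat \<Rightarrow> 'a set" where
  "loewy_series R S 0 = R"
| "loewy_series R S (Suc n) = (if loewy_series R S n = S then S else socle (loewy_series R S n) S)"

definition loewy_length :: "'a::comm_ring_1 set \<Rightarrow> 'a set \<Rightarrow> nat" where
  "loewy_length R S = (LEAST n. loewy_series R S n = S)"

definition pointwise_minimal :: "'a::comm_ring_1 set \<Rightarrow> 'a set \<Rightarrow> bool" where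
  "pointwise_minimal R S \<longleftrightarrow> (\<forall>x \<in> S - R. minimal_ext R (ring_gen (insert x R)))"

end

theory Submission
  imports Defs
begin

text \<open>In a pointwise minimal extension every \<open>x \<in> S - R\<close> lies in the atom \<open>R[x]\<close>,
  so the atoms together with \<open>R\<close> already cover \<open>S\<close>, and their compositum is \<open>S\<close>.\<close>

lemma ring_gen_superset: "X \<subseteq> ring_gen X"
  unfolding ring_gen_def by blast

lemma ring_gen_least: "is_subring S \<Longrightarrow> X \<subseteq> S \<Longrightarrow> ring_gen X \<subseteq> S"
  unfolding ring_gen_def by blast

lemma ring_gen_eq_self: "is_subring A \<Longrightarrow> ring_gen A = A"
  unfolding ring_gen_def by blast

lemma atoms_subset: "\<Union>(atoms R S) \<subseteq> S"
  unfolding atoms_def subalg_interval_def by blast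

lemma pointwise_minimal_simple_ext_mem_atoms:
  assumes "pointwise_minimal R S" and "is_subring S" and "R \<subseteq> S" and "x \<in> S - R"
  shows "ring_gen (insert x R) \<in> atoms R S"
proof -
  let ?T = "ring_gen (insert x R)"
  have "minimal_ext R ?T"
    using assms(1,4) unfolding pointwise_minimal_def by blast
  moreover have "?T \<subseteq> S"
    using ring_gen_least[OF assms(2)] assms(3,4) by blast
  moreover have "R \<subseteq> ?T"
    using ring_gen_superset[of "insert x R"] by blast
  ultimately show ?thesis
    unfolding atoms_def subalg_interval_def minimal_ext_def by blast
qed

lemma pointwise_minimal_atoms_cover:
  assumes "pointwise_minimal R S" and "is_subring S" and "R \<subseteq> S"
  shows "R \<union> \<Union>(atoms R S) = S"
proof
  show "R \<union> \<Union>(atoms R S) \<subseteq> S"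
    using assms(3) atoms_subset by blast
next
  show "S \<subseteq> R \<union> \<Union>(atoms R S)"
  proof
    fix x assume "x \<in> S"
    show "x \<in> R \<union> \<Union>(atoms R S)"
    proof (cases "x \<in> R")
      case False
      with \<open>x \<in> S\<close> have "ring_gen (insert x R) \<in> atoms R S"
        using pointwise_minimal_simple_ext_mem_atoms[OF assms] by blast
      moreover have "x \<in> ring_gen (insert x R)"
        using ring_gen_superset by blast
      ultimately show ?thesis by blast
    qed simp
  qed
qed

lemma socle_eq_if_pointwise_minimal:
  assumes "pointwise_minimal R S" and "is_subring S" and "R \<subseteq> S"
  shows "socle R S = S"
  unfolding socle_def pointwise_minimal_atoms_cover[OF assms] using ring_gen_eq_self[OF assms(2)] .

lemma loewy_length_eq_1_if_socle_eq:
  assumes "R \<noteq> S" and "socle R S = S"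
  shows "loewy_length R S = 1"
proof -
  have "loewy_series R S 1 = S"
    using assms by simp
  moreover have "1 \<le> n" if "loewy_series R S n = S" for n
    using that assms(1) by (cases n) simp_all
  ultimately show ?thesis
    unfolding loewy_length_def by (rule Least_equality)
qed

theorem proposition8p312:
  fixes R S :: "'a::comm_ring_1 set"
  assumes "is_subring R" and "is_subring S" and "R \<subset> S"
    and "pointwise_minimal R S"
  shows "socle R S = S \<and> loewy_length R S = 1"
proof -
  have socle: "socle R S = S"
    using socle_eq_if_pointwise_minimal assms(2-4) by blast
  moreover have "loewy_length R S = 1"
    using loewy_length_eq_1_if_socle_eq socle assms(3) by blast
  ultimately show ?thesis ..
qed

end
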